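(* Let $\sigma_B^2=a\,\sigma_A^2$ for a fixed constant $a\in(0,\infty)$. Then for every fixed $r_A>0$, $r_B>0$, as $\sigma_A^2\to0$, $$f_{\hat R_A,\hat R_B}(r_A,r_B)=\frac{2r_Ae^{-r_A^2/p}}{p}\cdot\frac{e^{-\frac{(r_B-r_A)^2}{\sigma_A^2+\sigma_B^2}}}{\sqrt{\pi(\sigma_A^2+\sigma_B^2)}}+O(\sigma_A),$$ i.e. the joint density asymptotically equals the product of a Rayleigh density (of $\hat R_A$, with scale parameter $\sqrt{p/2}$) and a conditional normal density of $\hat R_B$ with mean $r_A$ and variance $(\sigma_A^2+\sigma_B^2)/2$.
   Context: Fix $p>0$. Let $H$ be a zero-mean circularly-symmetric complex Gaussian (ZMCSCG) variable of variance $p$, and $W_A,W_B$ ZMCSCG with variances $\sigma_A^2,\sigma_B^2>0$, mutually independent and independent of $H$. Define $\hat H_A=H+W_A$, $\hat H_B=H+W_B$, envelopes $\hat R_A=|\hat H_A|$, $\hat R_B=|\hat H_B|$, and let $f_{\hat R_A,\hat R_B}$ be the joint density of $(\hat R_A,\hat R_B)$. The notation $O(\cdot)$ refers to a bound $|\cdot|\le\lambda\,\sigma_A$ for some constant $\lambda$ (possibly depending on $r_A,r_B,p,a$) for all sufficiently small $\sigma_A$. *)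

theory Defs
  imports "HOL-Analysis.Analysis"
begin

text \<open>Density (w.r.t. Lebesgue measure on the complex plane, identified with R^2)
  of a zero-mean circularly-symmetric complex Gaussian variable of variance v.\<close>
definition zmcscg_pdf :: "real \<Rightarrow> complex \<Rightarrow> real" where
  "zmcscg_pdf v z = exp (- (cmod z)\<^sup>2 / v) / (pi * v)"

text \<open>Joint density of (Hhat_A, Hhat_B) = (H + W_A, H + W_B) at (x, y), where
  H, W_A, W_B are independent ZMCSCG with variances p, sA2, sB2:
  obtained by conditioning on H = h (independence) and integrating out h.\<close>
definition joint_chan_pdf :: "real \<Rightarrow> real \<Rightarrow> real \<Rightarrow> complex \<Rightarrow> complex \<Rightarrow> real" where
  "joint_chan_pdf p sA2 sB2 x y =
     (LINT h|lborel. zmcscg_pdf p h * zmcscg_pdf sA2 (x - h) * zmcscg_pdf sB2 (y - h))"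

text \<open>Joint density of the envelopes (|Hhat_A|, |Hhat_B|) at (rA, rB):
  polar change of variables in both complex coordinates, integrating out the phases.\<close>
definition envelope_joint_pdf :: "real \<Rightarrow> real \<Rightarrow> real \<Rightarrow> real \<Rightarrow> real \<Rightarrow> real" where
  "envelope_joint_pdf p sA2 sB2 rA rB =
     rA * rB * (LBINT tA=0..2*pi. (LBINT tB=0..2*pi.
        joint_chan_pdf p sA2 sB2 (complex_of_real rA * cis tA) (complex_of_real rB * cis tB)))"

end

theory Submission
  imports Defs "HOL-Probability.Distributions" "HOL-Real_Asymp.Real_Asymp"
begin

(* Integrating out the common channel H is a complex Gaussian integral (complete the square), so
   the joint density of (Hhat_A, Hhat_B) is explicit. In polar coordinates only the phase difference
   enters, through exp (z cos t) with z = 2 p r_A r_B / D and D = sigma_A^2 sigma_B^2 + p (sigma_A^2 + sigma_B^2);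
   its integral over a period is 2 pi I_0(z) = 4 e^z H(z) with H(z) = int_0^(pi/2) exp (-2 z sin^2 s) ds.
   Laplace's method gives H(z) = sqrt (pi / (8 z)) + O(z^(-3/2)), and since z ~ 1/sigma_A^2 this pins the
   envelope density down to a leading term up to O(sqrt D) = O(sigma_A). For r_A <> r_B both the leading
   term and the claimed product density are O(exp (-c / sigma_A^2)); for r_A = r_B they differ only by
   replacing D with p (sigma_A^2 + sigma_B^2), a relative perturbation of order sigma_A^2. *)

lemma lborel_eq_distr_Complex:
  "lborel = distr (lborel \<Otimes>\<^sub>M lborel) borel (\<lambda>(x, y). Complex x y)"
proof (rule lborel_eqI)
  fix l u :: complex
  assume lu: "\<And>b. b \<in> Basis \<Longrightarrow> l \<bullet> b \<le> u \<bullet> b"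
  have le: "Re l \<le> Re u" "Im l \<le> Im u"
    using lu[of 1] lu[of \<i>] by (auto simp: Basis_complex_def)
  have [measurable]: "(\<lambda>(x, y). Complex x y) \<in> borel_measurable (lborel \<Otimes>\<^sub>M lborel)"
    by (simp add: case_prod_beta' borel_measurable_complex_iff)
  have "(\<lambda>(x, y). Complex x y) -` box l u \<inter> space (lborel \<Otimes>\<^sub>M lborel)
      = box (Re l) (Re u) \<times> box (Im l) (Im u)"
    by (auto simp: box_def Basis_complex_def space_pair_measure)
  then have "emeasure (distr (lborel \<Otimes>\<^sub>M lborel) borel (\<lambda>(x, y). Complex x y)) (box l u)
      = emeasure (lborel \<Otimes>\<^sub>M lborel) (box (Re l) (Re u) \<times> box (Im l) (Im u))"
    by (subst emeasure_distr) auto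
  also have "\<dots> = ennreal ((Re u - Re l) * (Im u - Im l))"
    using le by (simp add: lborel.emeasure_pair_measure_Times ennreal_mult)
  finally show "emeasure (distr (lborel \<Otimes>\<^sub>M lborel) borel (\<lambda>(x, y). Complex x y)) (box l u)
      = (\<Prod>b\<in>Basis. (u - l) \<bullet> b)"
    by (simp add: Basis_complex_def)
qed simp

lemma has_bochner_integral_exp_neg_sq:
  fixes c \<mu> :: real
  assumes "c > 0"
  shows "has_bochner_integral lborel (\<lambda>x. exp (- c * (x - \<mu>)\<^sup>2)) (sqrt (pi / c))"
proof -
  define \<sigma> where "\<sigma> = 1 / sqrt (2 * c)"
  have \<sigma>: "\<sigma>\<^sup>2 = 1 / (2 * c)"
    using assms by (simp add: \<sigma>_def power_divide)
  have "exp (- c * (x - \<mu>)\<^sup>2) = sqrt (pi / c) * normal_density \<mu> \<sigma> x" for x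
    using assms \<sigma> by (simp add: normal_density_def)
  moreover have "has_bochner_integral lborel (\<lambda>x. sqrt (pi / c) * normal_density \<mu> \<sigma> x) (sqrt (pi / c) * 1)"
    using assms by (intro has_bochner_integral_mult_right) (simp add: has_bochner_integral_iff \<sigma>_def)
  ultimately show ?thesis
    by simp
qed

lemma has_bochner_integral_exp_neg_cmod_sq:
  fixes c :: real and m :: complex
  assumes c: "c > 0"
  shows "has_bochner_integral lborel (\<lambda>h. exp (- c * (cmod (h - m))\<^sup>2)) (pi / c)"
proof (rule has_bochner_integral_nn_integral)
  let ?e1 = "\<lambda>x. exp (- c * (x - Re m)\<^sup>2)" and ?e2 = "\<lambda>y. exp (- c * (y - Im m)\<^sup>2)"
  have i1: "(\<integral>\<^sup>+x. ennreal (?e1 x) \<partial>lborel) = ennreal (sqrt (pi / c))"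
    using has_bochner_integral_exp_neg_sq[OF c, of "Re m"]
    by (subst nn_integral_eq_integral) (auto simp: has_bochner_integral_iff)
  have i2: "(\<integral>\<^sup>+y. ennreal (?e2 y) \<partial>lborel) = ennreal (sqrt (pi / c))"
    using has_bochner_integral_exp_neg_sq[OF c, of "Im m"]
    by (subst nn_integral_eq_integral) (auto simp: has_bochner_integral_iff)
  have split: "exp (- c * (cmod (Complex x y - m))\<^sup>2) = ?e1 x * ?e2 y" for x y
    by (simp add: cmod_def exp_add[symmetric] algebra_simps)
  have "(\<integral>\<^sup>+h. ennreal (exp (- c * (cmod (h - m))\<^sup>2)) \<partial>lborel)
      = (\<integral>\<^sup>+z. ennreal (exp (- c * (cmod ((case z of (x, y) \<Rightarrow> Complex x y) - m))\<^sup>2))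
          \<partial>(lborel \<Otimes>\<^sub>M lborel))"
    by (subst lborel_eq_distr_Complex, subst nn_integral_distr)
       (auto simp: case_prod_beta' borel_measurable_complex_iff)
  also have "\<dots> = (\<integral>\<^sup>+z. ennreal (?e1 (fst z)) * ennreal (?e2 (snd z)) \<partial>(lborel \<Otimes>\<^sub>M lborel))"
    by (intro nn_integral_cong)
       (auto simp only: split fst_conv snd_conv split: prod.split intro!: ennreal_mult exp_ge_zero)
  also have "\<dots> = (\<integral>\<^sup>+x. \<integral>\<^sup>+y. ennreal (?e1 x) * ennreal (?e2 y) \<partial>lborel \<partial>lborel)"
    using lborel.nn_integral_fst[where f = "\<lambda>z. ennreal (?e1 (fst z)) * ennreal (?e2 (snd z))"]
    by simp
  also have "\<dots> = ennreal (sqrt (pi / c)) * ennreal (sqrt (pi / c))"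
    using i1 i2 by (simp add: nn_integral_cmult nn_integral_multc)
  also have "\<dots> = ennreal (pi / c)"
    using c by (simp add: ennreal_mult[symmetric])
  finally show "(\<integral>\<^sup>+h. ennreal (exp (- c * (cmod (h - m))\<^sup>2)) \<partial>lborel) = ennreal (pi / c)" .
qed (use c in auto)

lemma has_bochner_integral_half_line_exp_neg_sq:
  fixes b :: real
  assumes b: "b > 0"
  shows "has_bochner_integral lborel (\<lambda>s. indicator {0..} s * exp (- b * s\<^sup>2)) (sqrt (pi / b) / 2)"
proof -
  have sb: "sqrt b > 0"
    using b by simp
  have "has_bochner_integral lborel
      (\<lambda>x. (\<lambda>x. indicator {0..} x *\<^sub>R exp (- x\<^sup>2)) (0 + sqrt b * x)) ((sqrt pi / 2) /\<^sub>R \<bar>sqrt b\<bar>)"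
    using lborel_has_bochner_integral_real_affine_iff[of "sqrt b" _ "sqrt pi / 2" 0] sb gaussian_moment_0
    by simp
  moreover have "indicator {0..} (sqrt b * x) = (indicator {0..} x :: real)" for x
    using sb by (simp add: indicator_def zero_le_mult_iff)
  moreover have "(sqrt b * x)\<^sup>2 = b * x\<^sup>2" for x
    using b by (simp add: power_mult_distrib)
  moreover have "(sqrt pi / 2) /\<^sub>R \<bar>sqrt b\<bar> = sqrt (pi / b) / 2"
    using sb by (simp add: real_sqrt_divide field_simps)
  ultimately show ?thesis
    by simp
qed

lemma sum_sq_div_complete_square:
  fixes p vA vB h x y :: real
  assumes pos: "p > 0" "vA > 0" "vB > 0"
  defines "D \<equiv> vA * vB + p * (vA + vB)"
  shows "h\<^sup>2 / p + (x - h)\<^sup>2 / vA + (y - h)\<^sup>2 / vB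
       = ((p + vB) * x\<^sup>2 + (p + vA) * y\<^sup>2 - 2 * p * x * y) / D
         + D / (p * vA * vB) * (h - p * (vB * x + vA * y) / D)\<^sup>2"
proof -
  have "D \<noteq> 0"
    using pos unfolding D_def by (metis add_pos_pos mult_pos_pos less_irrefl)
  then show ?thesis
    using pos by (simp add: field_simps power2_eq_square) (simp add: D_def, algebra)
qed

lemma cmod_sq_div_complete_square:
  fixes p vA vB :: real and h x y :: complex
  assumes p: "p > 0" and A: "vA > 0" and B: "vB > 0"
  defines "D \<equiv> vA * vB + p * (vA + vB)"
  shows "(cmod h)\<^sup>2 / p + (cmod (x - h))\<^sup>2 / vA + (cmod (y - h))\<^sup>2 / vB
       = ((p + vB) * (cmod x)\<^sup>2 + (p + vA) * (cmod y)\<^sup>2 - 2 * p * (Re x * Re y + Im x * Im y)) / D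
         + D / (p * vA * vB) * (cmod (h - (p / D) *\<^sub>R (vB *\<^sub>R x + vA *\<^sub>R y)))\<^sup>2"
proof -
  have "(cmod h)\<^sup>2 / p + (cmod (x - h))\<^sup>2 / vA + (cmod (y - h))\<^sup>2 / vB
    = ((Re h)\<^sup>2 / p + (Re x - Re h)\<^sup>2 / vA + (Re y - Re h)\<^sup>2 / vB)
      + ((Im h)\<^sup>2 / p + (Im x - Im h)\<^sup>2 / vA + (Im y - Im h)\<^sup>2 / vB)"
    by (simp add: cmod_power2 add_divide_distrib)
  then show ?thesis
    unfolding sum_sq_div_complete_square[OF p A B] D_def[symmetric]
    by (simp add: cmod_power2 add_divide_distrib diff_divide_distrib algebra_simps)
qed

lemma joint_chan_pdf_eq:
  fixes p vA vB :: real and x y :: complex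
  assumes p: "p > 0" and A: "vA > 0" and B: "vB > 0"
  defines "D \<equiv> vA * vB + p * (vA + vB)"
  shows "joint_chan_pdf p vA vB x y =
    exp (- ((p + vB) * (cmod x)\<^sup>2 + (p + vA) * (cmod y)\<^sup>2
            - 2 * p * (Re x * Re y + Im x * Im y)) / D) / (pi\<^sup>2 * D)"
proof -
  have D: "D > 0"
    using p A B by (simp add: D_def add_pos_pos)
  define c where "c = D / (p * vA * vB)"
  define m where "m = (p / D) *\<^sub>R (vB *\<^sub>R x + vA *\<^sub>R y)"
  define Q where "Q = ((p + vB) * (cmod x)\<^sup>2 + (p + vA) * (cmod y)\<^sup>2
                      - 2 * p * (Re x * Re y + Im x * Im y)) / D"
  have integrand: "zmcscg_pdf p h * zmcscg_pdf vA (x - h) * zmcscg_pdf vB (y - h)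
      = exp (- Q) / (pi ^ 3 * p * vA * vB) * exp (- c * (cmod (h - m))\<^sup>2)" for h
  proof -
    have "zmcscg_pdf p h * zmcscg_pdf vA (x - h) * zmcscg_pdf vB (y - h)
      = exp (- (cmod h)\<^sup>2 / p) * exp (- (cmod (x - h))\<^sup>2 / vA) * exp (- (cmod (y - h))\<^sup>2 / vB)
        / (pi ^ 3 * p * vA * vB)"
      by (simp add: zmcscg_pdf_def power3_eq_cube)
    also have "\<dots> = exp (- ((cmod h)\<^sup>2 / p + (cmod (x - h))\<^sup>2 / vA + (cmod (y - h))\<^sup>2 / vB))
        / (pi ^ 3 * p * vA * vB)"
      by (simp add: mult_exp_exp)
    also have "\<dots> = exp (- Q) / (pi ^ 3 * p * vA * vB) * exp (- c * (cmod (h - m))\<^sup>2)"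
      unfolding cmod_sq_div_complete_square[OF p A B] D_def[symmetric]
      by (simp add: Q_def c_def m_def mult_exp_exp)
    finally show ?thesis .
  qed
  have "has_bochner_integral lborel (\<lambda>h. exp (- Q) / (pi ^ 3 * p * vA * vB) * exp (- c * (cmod (h - m))\<^sup>2))
      (exp (- Q) / (pi ^ 3 * p * vA * vB) * (pi / c))"
    using p A B D by (intro has_bochner_integral_mult_right has_bochner_integral_exp_neg_cmod_sq) (simp add: c_def)
  then have "joint_chan_pdf p vA vB x y = exp (- Q) / (pi ^ 3 * p * vA * vB) * (pi / c)"
    unfolding joint_chan_pdf_def integrand by (simp add: has_bochner_integral_iff)
  also have "\<dots> = exp (- Q) / (pi\<^sup>2 * D)"
    using p A B D by (simp add: c_def field_simps power2_eq_square power3_eq_cube)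
  finally show ?thesis
    unfolding Q_def minus_divide_left .
qed

lemma interval_integral_shift:
  fixes f :: "real \<Rightarrow> 'a::euclidean_space" and c d t :: real
  assumes "continuous_on UNIV f"
  shows "(LBINT u=c..d. f (u + t)) = (LBINT y=c+t..d+t. f y)"
proof -
  have ordered: "(LBINT u=c..d. f (u + t)) = (LBINT y=c+t..d+t. f y)" if "c \<le> d" for c d :: real
  proof -
    have "(LBINT u=c..d. 1 *\<^sub>R f (u + t)) = (LBINT y=c+t..d+t. f y)"
      by (rule interval_integral_substitution_finite[OF that])
         (auto intro!: derivative_eq_intros continuous_on_subset[OF assms])
    then show ?thesis
      by simp
  qed
  show ?thesis
  proof (cases "c \<le> d")
    case False
    then show ?thesis
      using ordered[of d c] by (metis interval_integral_endpoints_reverse nle_le)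
  qed (rule ordered)
qed

lemma interval_integral_periodic:
  fixes f :: "real \<Rightarrow> 'a::euclidean_space" and b T :: real
  assumes cont: "continuous_on UNIV f" and periodic: "\<And>t. f (t + T) = f t"
  shows "(LBINT y=b..b+T. f y) = (LBINT y=0..T. f y)"
proof -
  have integrable: "interval_lebesgue_integrable lborel x y f" for x y :: real
    by (rule interval_integrable_isCont) (use cont in \<open>auto simp: continuous_on_eq_continuous_at\<close>)
  have "(LBINT y=b..b+T. f y) = (LBINT y=b..0. f y) + (LBINT y=0..T. f y) + (LBINT y=T..b+T. f y)"
    using integrable[of "min b (min 0 T)" "max b (max 0 T)"]
      integrable[of "min b (min T (b + T))" "max b (max T (b + T))"]
    by (simp add: interval_integral_sum zero_ereal_def)
  moreover have "(LBINT y=T..b+T. f y) = (LBINT u=0..b. f u)"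
    using interval_integral_shift[OF cont, of 0 b T] by (simp add: periodic zero_ereal_def)
  ultimately show ?thesis
    using interval_integral_endpoints_reverse[of "ereal 0" b f] by (simp add: zero_ereal_def)
qed

(* This is (pi / 2) e^(-z) I_0(z), with I_0 the modified Bessel function of order zero. *)
definition exp_sin_sq_integral :: "real \<Rightarrow> real" where
  "exp_sin_sq_integral z = (LBINT s=0..pi/2. exp (- 2 * z * (sin s)\<^sup>2))"

lemma interval_integral_exp_cos:
  "(LBINT t=0..2*pi. exp (z * cos t)) = 4 * exp z * exp_sin_sq_integral z"
proof -
  let ?f = "\<lambda>t. exp (z * cos t)"
  have cont: "continuous_on UNIV ?f"
    by (intro continuous_intros)
  have integrable: "interval_lebesgue_integrable lborel (- pi) pi ?f"
    by (intro interval_integrable_isCont continuous_intros)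
  have "(LBINT t=0..2*pi. ?f t) = (LBINT t=-pi..-pi+2*pi. ?f t)"
    by (rule interval_integral_periodic[OF cont, symmetric]) simp
  also have "\<dots> = (LBINT t=-pi..0. ?f t) + (LBINT t=0..pi. ?f t)"
    using integrable by (simp add: interval_integral_sum zero_ereal_def)
  also have "(LBINT t=-pi..0. ?f t) = (LBINT t=0..pi. ?f t)"
    by (subst interval_integral_reflect) (simp add: zero_ereal_def)
  also have "(LBINT t=0..pi. ?f t) = 2 * (LBINT s=0..pi/2. ?f (2 * s))"
  proof -
    have "(LBINT s=ereal 0..ereal (pi/2). 2 *\<^sub>R ?f (2 * s)) = (LBINT t=ereal (2*0)..ereal (2*(pi/2)). ?f t)"
      by (rule interval_integral_substitution_finite) (auto intro!: derivative_eq_intros continuous_intros)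
    then show ?thesis
      by (simp add: zero_ereal_def)
  qed
  also have "(LBINT s=0..pi/2. ?f (2 * s)) = exp z * exp_sin_sq_integral z"
  proof -
    have "?f (2 * s) = exp z * exp (- 2 * z * (sin s)\<^sup>2)" for s
      unfolding cos_double_sin mult_exp_exp by (simp add: algebra_simps)
    then show ?thesis
      by (simp add: exp_sin_sq_integral_def)
  qed
  finally show ?thesis
    by simp
qed

lemma envelope_joint_pdf_eq:
  fixes p vA vB rA rB :: real
  assumes p: "p > 0" and A: "vA > 0" and B: "vB > 0"
  defines "D \<equiv> vA * vB + p * (vA + vB)"
  shows "envelope_joint_pdf p vA vB rA rB =
    8 * rA * rB * exp (- (p * (rB - rA)\<^sup>2 + vB * rA\<^sup>2 + vA * rB\<^sup>2) / D) / (pi * D)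
      * exp_sin_sq_integral (2 * p * rA * rB / D)"
proof -
  have D: "D > 0"
    using p A B by (simp add: D_def add_pos_pos)
  define C where "C = exp (- ((p + vB) * rA\<^sup>2 + (p + vA) * rB\<^sup>2) / D) / (pi\<^sup>2 * D)"
  define z where "z = 2 * p * rA * rB / D"
  have polar: "joint_chan_pdf p vA vB (complex_of_real rA * cis tA) (complex_of_real rB * cis tB)
      = C * exp (z * cos (tB - tA))" for tA tB
  proof -
    have "- ((p + vB) * rA\<^sup>2 + (p + vA) * rB\<^sup>2 - 2 * p * (rA * rB * cos (tB - tA))) / D
        = - ((p + vB) * rA\<^sup>2 + (p + vA) * rB\<^sup>2) / D + z * cos (tB - tA)"
      using D by (simp add: z_def field_simps)
    then show ?thesis
      unfolding joint_chan_pdf_eq[OF p A B] D_def[symmetric] C_def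
      by (simp add: norm_mult cos_diff exp_add algebra_simps)
  qed
  have inner: "(LBINT tB=0..2*pi. exp (z * cos (tB - tA))) = 4 * exp z * exp_sin_sq_integral z" for tA
    using interval_integral_shift[of "\<lambda>t. exp (z * cos t)" 0 "2*pi" "- tA"]
      interval_integral_periodic[of "\<lambda>t. exp (z * cos t)" "2*pi" "- tA"] interval_integral_exp_cos
    by (simp add: zero_ereal_def continuous_intros)
  have exponent: "- ((p + vB) * rA\<^sup>2 + (p + vA) * rB\<^sup>2) / D + z
      = - (p * (rB - rA)\<^sup>2 + vB * rA\<^sup>2 + vA * rB\<^sup>2) / D"
    using D by (simp add: z_def field_simps power2_eq_square)
  have "envelope_joint_pdf p vA vB rA rB
      = rA * rB * (LBINT tA=0..2*pi. (LBINT tB=0..2*pi. C * exp (z * cos (tB - tA))))"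
    unfolding envelope_joint_pdf_def polar ..
  also have "\<dots> = rA * rB * (2 * pi * (C * (4 * exp z * exp_sin_sq_integral z)))"
    by (simp add: inner) (simp add: zero_ereal_def)
  also have "\<dots> = 8 * rA * rB * (exp (- ((p + vB) * rA\<^sup>2 + (p + vA) * rB\<^sup>2) / D) * exp z) / (pi * D)
      * exp_sin_sq_integral z"
    by (simp add: C_def power2_eq_square)
  finally show ?thesis
    unfolding mult_exp_exp exponent by (simp only: z_def)
qed

lemma sin_ge_cubic:
  fixes s :: real
  assumes "0 \<le> s"
  shows "s - s ^ 3 / 6 \<le> sin s"
proof -
  have "(\<Sum>m<3. sin_coeff m * s ^ m) = s"
    by (simp add: eval_nat_numeral sin_coeff_def)
  then have "\<bar>sin s - s\<bar> \<le> inverse (fact 3) * \<bar>s\<bar> ^ 3"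
    using Maclaurin_sin_bound[of s 3] by simp
  moreover have "inverse (fact 3) * \<bar>s\<bar> ^ 3 = s ^ 3 / 6"
    using assms by (simp add: eval_nat_numeral)
  ultimately show ?thesis
    by (simp only: abs_le_iff) linarith
qed

lemma sin_sq_bounds:
  fixes s :: real
  assumes s: "0 \<le> s" "s \<le> pi / 2"
  shows "s\<^sup>2 / 9 \<le> (sin s)\<^sup>2" and "(sin s)\<^sup>2 \<le> s\<^sup>2" and "s\<^sup>2 - (sin s)\<^sup>2 \<le> s ^ 4 / 3"
proof -
  have "s\<^sup>2 \<le> 2\<^sup>2"
    using s pi_less_4 by (intro power_mono) auto
  then have cubic: "s ^ 3 / 6 \<le> 2 * s / 3"
    using s mult_left_mono[of "s\<^sup>2" 4 s] by (simp add: power3_eq_cube power2_eq_square)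
  have lower: "s - s ^ 3 / 6 \<le> sin s"
    by (rule sin_ge_cubic[OF s(1)])
  have "s / 3 \<le> sin s"
    using lower cubic by simp
  then show "s\<^sup>2 / 9 \<le> (sin s)\<^sup>2"
    using s power_mono[of "s / 3" "sin s" 2] by (simp add: power_divide)
  show "(sin s)\<^sup>2 \<le> s\<^sup>2"
    using s \<open>s / 3 \<le> sin s\<close> sin_x_le_x[of s] by (intro power_mono) auto
  have "(s - s ^ 3 / 6)\<^sup>2 \<le> (sin s)\<^sup>2"
    using lower cubic s by (intro power_mono) auto
  moreover have "(s - s ^ 3 / 6)\<^sup>2 = s\<^sup>2 - s ^ 4 / 3 + s ^ 6 / 36"
    by (simp add: power2_eq_square eval_nat_numeral algebra_simps)
  moreover have "0 \<le> s ^ 6"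
    using s by simp
  ultimately show "s\<^sup>2 - (sin s)\<^sup>2 \<le> s ^ 4 / 3"
    by linarith
qed

lemma exp_diff_le_mult_exp:
  fixes x y :: real
  assumes "y \<le> x"
  shows "exp x - exp y \<le> (x - y) * exp x"
proof -
  have "exp x * (1 + (y - x)) \<le> exp x * exp (y - x)"
    by (intro mult_left_mono exp_ge_add_one_self) simp
  then show ?thesis
    by (simp add: mult_exp_exp algebra_simps)
qed

lemma power4_mult_exp_neg_le:
  fixes b s :: real
  assumes b: "b > 0"
  shows "s ^ 4 * exp (- b * s\<^sup>2) \<le> 16 / b\<^sup>2 * exp (- b * s\<^sup>2 / 2)"
proof -
  have "b * s\<^sup>2 / 4 \<le> exp (b * s\<^sup>2 / 4)"
    using exp_ge_add_one_self[of "b * s\<^sup>2 / 4"] by linarith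
  then have "(b * s\<^sup>2 / 4)\<^sup>2 \<le> (exp (b * s\<^sup>2 / 4))\<^sup>2"
    using b by (intro power_mono) auto
  then have "b\<^sup>2 * s ^ 4 / 16 \<le> exp (b * s\<^sup>2 / 2)"
    by (simp add: power_mult_distrib power_divide power2_eq_square mult_exp_exp eval_nat_numeral mult_ac)
  then have "s ^ 4 \<le> 16 / b\<^sup>2 * exp (b * s\<^sup>2 / 2)"
    using b by (simp add: field_simps)
  then have "s ^ 4 * exp (- b * s\<^sup>2) \<le> 16 / b\<^sup>2 * exp (b * s\<^sup>2 / 2) * exp (- b * s\<^sup>2)"
    by (intro mult_right_mono) auto
  then show ?thesis
    by (simp add: mult.assoc mult_exp_exp)
qed

lemma exp_neg_sin_sq_le:
  fixes z s :: real
  assumes z: "z > 0" and s: "0 \<le> s" "s \<le> pi / 2"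
  shows "exp (- 2 * z * (sin s)\<^sup>2) \<le> exp (- 2 * z * s\<^sup>2) + 216 / z * exp (- z * s\<^sup>2 / 9)"
proof -
  note sin_sq = sin_sq_bounds[OF s]
  have "exp (- 2 * z * (sin s)\<^sup>2) - exp (- 2 * z * s\<^sup>2)
      \<le> 2 * z * (s\<^sup>2 - (sin s)\<^sup>2) * exp (- 2 * z * (sin s)\<^sup>2)"
    using exp_diff_le_mult_exp[of "- 2 * z * s\<^sup>2" "- 2 * z * (sin s)\<^sup>2"] sin_sq(2) z
    by (simp add: algebra_simps)
  also have "\<dots> \<le> 2 * z * (s ^ 4 / 3) * exp (- (2 * z / 9) * s\<^sup>2)"
    using sin_sq z by (intro mult_mono) auto
  also have "\<dots> = 2 * z / 3 * (s ^ 4 * exp (- (2 * z / 9) * s\<^sup>2))"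
    by simp
  also have "\<dots> \<le> 2 * z / 3 * (16 / (2 * z / 9)\<^sup>2 * exp (- (2 * z / 9) * s\<^sup>2 / 2))"
    using z by (intro mult_left_mono power4_mult_exp_neg_le) auto
  also have "\<dots> = 216 / z * exp (- z * s\<^sup>2 / 9)"
    using z by (simp add: power2_eq_square field_simps)
  finally show ?thesis
    by simp
qed

lemma indicator_exp_neg_sin_sq_ge:
  fixes z s :: real
  assumes z: "z > 0"
  shows "indicator {0..} s * exp (- (2 * z) * s\<^sup>2) - exp (- z * pi\<^sup>2 / 4) * (indicator {0..} s * exp (- z * s\<^sup>2))
         \<le> indicator {0..pi/2} s * exp (- 2 * z * (sin s)\<^sup>2)"
proof (cases "0 \<le> s \<and> s \<le> pi / 2")
  case True
  then have "exp (- (2 * z) * s\<^sup>2) \<le> exp (- 2 * z * (sin s)\<^sup>2)"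
    using sin_sq_bounds(2)[of s] z by simp
  moreover have "0 \<le> exp (- z * pi\<^sup>2 / 4) * exp (- z * s\<^sup>2)"
    by simp
  ultimately have "exp (- (2 * z) * s\<^sup>2) - exp (- z * pi\<^sup>2 / 4) * exp (- z * s\<^sup>2) \<le> exp (- 2 * z * (sin s)\<^sup>2)"
    by linarith
  then show ?thesis
    using True by (simp add: indicator_def)
next
  case False
  have "exp (- (2 * z) * s\<^sup>2) \<le> exp (- z * pi\<^sup>2 / 4) * exp (- z * s\<^sup>2)" if "0 \<le> s"
  proof -
    have "(pi / 2)\<^sup>2 \<le> s\<^sup>2"
      using False that by (intro power_mono) auto
    then have "z * pi\<^sup>2 / 4 \<le> z * s\<^sup>2"
      using z mult_left_mono[of "(pi / 2)\<^sup>2" "s\<^sup>2" z] by (simp add: power_divide)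
    then show ?thesis
      by (simp add: mult_exp_exp)
  qed
  then show ?thesis
    using False by (simp add: indicator_def)
qed

lemma exp_sin_sq_integral_approx:
  fixes z :: real
  assumes z: "z > 0"
  shows "\<bar>exp_sin_sq_integral z - sqrt (pi / (2 * z)) / 2\<bar> \<le> 324 * sqrt pi / (z * sqrt z)"
proof -
  let ?I = "indicator {0..pi/2} :: real \<Rightarrow> real"
  let ?J = "indicator {0..} :: real \<Rightarrow> real"
  let ?E = "\<lambda>s. exp (- 2 * z * (sin s)\<^sup>2)"
  let ?S = "sqrt (pi / (2 * z)) / 2"
  let ?C = "exp (- z * pi\<^sup>2 / 4)"
  have integrable: "integrable lborel (\<lambda>s. ?I s * ?E s)"
    using borel_integrable_atLeastAtMost'[of 0 "pi/2" ?E]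
    by (simp add: set_integrable_def continuous_intros)
  have H: "exp_sin_sq_integral z = integral\<^sup>L lborel (\<lambda>s. ?I s * ?E s)"
    unfolding exp_sin_sq_integral_def
    by (subst interval_integral_Icc[of 0 "pi/2", simplified zero_ereal_def[symmetric]])
       (auto simp: set_lebesgue_integral_def)
  have gauss: "has_bochner_integral lborel (\<lambda>s. ?J s * exp (- b * s\<^sup>2)) (sqrt (pi / b) / 2)"
    if "b > 0" for b
    by (rule has_bochner_integral_half_line_exp_neg_sq[OF that])
  have lower_int: "has_bochner_integral lborel (\<lambda>s. ?J s * exp (- (2 * z) * s\<^sup>2) - ?C * (?J s * exp (- z * s\<^sup>2)))
      (?S - ?C * (sqrt (pi / z) / 2))"
    using z by (intro has_bochner_integral_diff has_bochner_integral_mult_right gauss) auto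
  have upper_int: "has_bochner_integral lborel (\<lambda>s. ?J s * exp (- (2 * z) * s\<^sup>2) + 216 / z * (?J s * exp (- (z / 9) * s\<^sup>2)))
      (?S + 216 / z * (sqrt (pi / (z / 9)) / 2))"
    using z by (intro has_bochner_integral_add has_bochner_integral_mult_right gauss) auto
  have lower_pt: "?J s * exp (- (2 * z) * s\<^sup>2) - ?C * (?J s * exp (- z * s\<^sup>2)) \<le> ?I s * ?E s" for s
    by (rule indicator_exp_neg_sin_sq_ge[OF z])
  have upper_pt: "?I s * ?E s \<le> ?J s * exp (- (2 * z) * s\<^sup>2) + 216 / z * (?J s * exp (- (z / 9) * s\<^sup>2))" for s
    using exp_neg_sin_sq_le[OF z, of s] z by (auto simp: indicator_def)
  have "?S - ?C * (sqrt (pi / z) / 2) \<le> exp_sin_sq_integral z"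
    unfolding H has_bochner_integral_integral_eq[OF lower_int, symmetric]
    using lower_int integrable lower_pt by (intro integral_mono) (auto dest: integrable.intros)
  moreover have "exp_sin_sq_integral z \<le> ?S + 216 / z * (sqrt (pi / (z / 9)) / 2)"
    unfolding H has_bochner_integral_integral_eq[OF upper_int, symmetric]
    using upper_int integrable upper_pt by (intro integral_mono) (auto dest: integrable.intros)
  moreover have "216 / z * (sqrt (pi / (z / 9)) / 2) = 324 * sqrt pi / (z * sqrt z)"
    using z by (simp add: real_sqrt_divide real_sqrt_mult field_simps)
  moreover have "?C * (sqrt (pi / z) / 2) \<le> 324 * sqrt pi / (z * sqrt z)"
  proof -
    have "z * pi\<^sup>2 / 4 \<le> exp (z * pi\<^sup>2 / 4)"
      using exp_ge_add_one_self[of "z * pi\<^sup>2 / 4"] by linarith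
    then have "?C \<le> 4 / (z * pi\<^sup>2)"
      using z by (simp add: exp_minus field_simps)
    also have "\<dots> \<le> 648 / z"
      using z pi_gt3 power_mono[of 3 pi 2] by (simp add: field_simps)
    finally show ?thesis
      using z by (simp add: real_sqrt_divide field_simps)
  qed
  ultimately show ?thesis
    by (simp add: abs_le_iff)
qed

definition envelope_leading_term :: "real \<Rightarrow> real \<Rightarrow> real \<Rightarrow> real \<Rightarrow> real \<Rightarrow> real" where
  "envelope_leading_term p vA vB rA rB =
     2 * sqrt (rA * rB) * exp (- (p * (rB - rA)\<^sup>2 + vB * rA\<^sup>2 + vA * rB\<^sup>2) / (vA * vB + p * (vA + vB)))
       / sqrt (pi * p * (vA * vB + p * (vA + vB)))"

lemma envelope_joint_pdf_approx:
  fixes p vA vB rA rB :: real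
  assumes p: "p > 0" and A: "vA > 0" and B: "vB > 0" and rA: "rA > 0" and rB: "rB > 0"
  defines "D \<equiv> vA * vB + p * (vA + vB)"
  shows "\<bar>envelope_joint_pdf p vA vB rA rB - envelope_leading_term p vA vB rA rB\<bar>
         \<le> 1296 * sqrt D / (p * sqrt (2 * pi * p * rA * rB))"
proof -
  have D: "D > 0"
    using p A B by (simp add: D_def add_pos_pos)
  define e where "e = exp (- (p * (rB - rA)\<^sup>2 + vB * rA\<^sup>2 + vA * rB\<^sup>2) / D)"
  define z where "z = 2 * p * rA * rB / D"
  define \<Phi> where "\<Phi> = 8 * rA * rB * e / (pi * D)"
  have z: "z > 0"
    using p rA rB D by (simp add: z_def)
  have "0 \<le> p * (rB - rA)\<^sup>2 + vB * rA\<^sup>2 + vA * rB\<^sup>2"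
    using p A B by (intro add_nonneg_nonneg mult_nonneg_nonneg) auto
  then have "- (p * (rB - rA)\<^sup>2 + vB * rA\<^sup>2 + vA * rB\<^sup>2) / D \<le> 0"
    using D by (intro divide_nonpos_pos) auto
  then have e: "0 < e" "e \<le> 1"
    unfolding e_def by auto
  have env: "envelope_joint_pdf p vA vB rA rB = \<Phi> * exp_sin_sq_integral z"
    unfolding envelope_joint_pdf_eq[OF p A B] \<Phi>_def e_def z_def D_def ..
  have sqrt_sq: "sqrt x * sqrt x = x" if "x \<ge> 0" for x :: real
    using that by simp
  have main: "\<Phi> * (sqrt (pi / (2 * z)) / 2) = envelope_leading_term p vA vB rA rB"
    unfolding envelope_leading_term_def D_def[symmetric] e_def[symmetric]
    using p rA rB D sqrt_sq[of p] sqrt_sq[of rA] sqrt_sq[of rB] sqrt_sq[of D] sqrt_sq[of pi]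
    by (simp add: \<Phi>_def z_def real_sqrt_divide real_sqrt_mult field_simps)
  have \<Phi>: "0 \<le> \<Phi>"
    using rA rB D e by (simp add: \<Phi>_def)
  have "\<bar>\<Phi> * exp_sin_sq_integral z - \<Phi> * (sqrt (pi / (2 * z)) / 2)\<bar>
      = \<Phi> * \<bar>exp_sin_sq_integral z - sqrt (pi / (2 * z)) / 2\<bar>"
    unfolding right_diff_distrib[symmetric] abs_mult using \<Phi> by simp
  also have "\<dots> \<le> \<Phi> * (324 * sqrt pi / (z * sqrt z))"
    using exp_sin_sq_integral_approx[OF z] \<Phi> by (rule mult_left_mono)
  also have "\<dots> \<le> 8 * rA * rB / (pi * D) * (324 * sqrt pi / (z * sqrt z))"
    using p rA rB D e z by (intro mult_right_mono) (auto simp: \<Phi>_def divide_right_mono)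
  also have "\<dots> = 1296 * sqrt D / (p * sqrt (2 * pi * p * rA * rB))"
    using p rA rB D sqrt_sq[of p] sqrt_sq[of rA] sqrt_sq[of rB] sqrt_sq[of D] sqrt_sq[of pi]
    by (simp add: z_def real_sqrt_divide real_sqrt_mult field_simps)
  finally show ?thesis
    unfolding env main e_def .
qed

lemma abs_exp_neg_mult_diff_le:
  fixes x y P Q :: real
  assumes x: "0 \<le> x" and y: "0 \<le> y" and P: "0 \<le> P"
  shows "\<bar>exp (- x) * P - exp (- y) * Q\<bar> \<le> \<bar>x - y\<bar> * P + \<bar>P - Q\<bar>"
proof -
  have lipschitz: "\<bar>exp (- x) - exp (- y)\<bar> \<le> \<bar>x - y\<bar>"
  proof -
    have "exp (- u) - exp (- v) \<le> v - u" if "0 \<le> u" "u \<le> v" for u v :: real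
      using exp_diff_le_mult_exp[of "- v" "- u"] mult_left_mono[of "exp (- u)" 1 "v - u"] that
      by simp
    then show ?thesis
      using x y by (cases "x \<le> y") (force simp: abs_if)+
  qed
  have "\<bar>exp (- x) * P - exp (- y) * Q\<bar> = \<bar>(exp (- x) - exp (- y)) * P + exp (- y) * (P - Q)\<bar>"
    by (simp add: algebra_simps)
  also have "\<dots> \<le> \<bar>exp (- x) - exp (- y)\<bar> * P + exp (- y) * \<bar>P - Q\<bar>"
    using P by (simp add: abs_mult abs_triangle_ineq[THEN order.trans])
  also have "\<dots> \<le> \<bar>x - y\<bar> * P + 1 * \<bar>P - Q\<bar>"
    using lipschitz P y by (intro add_mono mult_right_mono) auto
  finally show ?thesis
    by simp
qed

lemma inverse_sqrt_diff_le:
  fixes u w :: real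
  assumes u: "0 < u" and uw: "u \<le> w"
  shows "1 / sqrt u - 1 / sqrt w \<le> (w - u) / (2 * u * sqrt u)"
proof -
  define a b where "a = sqrt u" and "b = sqrt w"
  have a: "0 < a" and ab: "a \<le> b"
    using u uw by (auto simp: a_def b_def)
  have "1 / a - 1 / b = (b - a) / (a * b)"
    using a ab by (simp add: field_simps)
  also have "\<dots> \<le> (b - a) / (a * a)"
    using a ab by (intro divide_left_mono mult_left_mono) auto
  also have "\<dots> = (b - a) * (2 * a) / (2 * a\<^sup>2 * a)"
    using a by (simp add: power2_eq_square)
  also have "\<dots> \<le> (b - a) * (b + a) / (2 * a\<^sup>2 * a)"
    using a ab by (intro divide_right_mono mult_left_mono) auto
  also have "\<dots> = (b\<^sup>2 - a\<^sup>2) / (2 * a\<^sup>2 * a)"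
    by (simp add: power2_eq_square algebra_simps)
  finally show ?thesis
    unfolding a_def b_def using u uw by simp
qed

lemma exp_div_sqrt_perturbation_le:
  fixes p \<sigma> q r :: real
  assumes p: "p > 0" and \<sigma>: "\<sigma> > 0" and q: "q \<ge> 0"
  defines "D \<equiv> p * \<sigma> + q"
  shows "\<bar>exp (- \<sigma> * r\<^sup>2 / D) / sqrt (p * D) - exp (- r\<^sup>2 / p) / (p * sqrt \<sigma>)\<bar>
         \<le> (r\<^sup>2 / p ^ 3 + 1 / (2 * p\<^sup>2)) * (q / (\<sigma> * sqrt \<sigma>))"
proof -
  define W where "W = q / (\<sigma> * sqrt \<sigma>)"
  have pD: "p * \<sigma> \<le> D" and D0: "D > 0"
    using p \<sigma> q by (simp_all add: D_def add_pos_nonneg)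
  define x where "x = \<sigma> * r\<^sup>2 / D"
  define y where "y = r\<^sup>2 / p"
  define P where "P = 1 / sqrt (p * D)"
  define Q where "Q = 1 / sqrt (p * (p * \<sigma>))"
  have Q: "Q = 1 / (p * sqrt \<sigma>)"
    using p \<sigma> by (simp add: Q_def real_sqrt_mult)
  have PQ: "P \<le> Q"
    unfolding P_def Q_def using p \<sigma> pD D0
    by (intro divide_left_mono real_sqrt_le_mono mult_left_mono) auto
  have yx: "y - x = r\<^sup>2 * q / (p * D)"
    using p D0 by (simp add: x_def y_def D_def field_simps)
  have "\<bar>x - y\<bar> = r\<^sup>2 * q / (p * D)"
    unfolding abs_minus_commute[of x y] yx using p q D0 by simp
  also have "\<dots> \<le> r\<^sup>2 * q / (p * (p * \<sigma>))"
    using p \<sigma> pD q D0 by (intro divide_left_mono mult_left_mono mult_pos_pos) auto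
  finally have "\<bar>x - y\<bar> * P \<le> r\<^sup>2 * q / (p * (p * \<sigma>)) * Q"
    using PQ D0 p by (intro mult_mono) (auto simp: P_def)
  also have "\<dots> = r\<^sup>2 / p ^ 3 * W"
    using p \<sigma> by (simp add: Q W_def power3_eq_cube)
  finally have first: "\<bar>x - y\<bar> * P \<le> r\<^sup>2 / p ^ 3 * W" .
  have "\<bar>P - Q\<bar> = 1 / sqrt (p * (p * \<sigma>)) - 1 / sqrt (p * D)"
    using PQ by (simp add: P_def Q_def)
  also have "\<dots> \<le> (p * D - p * (p * \<sigma>)) / (2 * (p * (p * \<sigma>)) * sqrt (p * (p * \<sigma>)))"
    using p \<sigma> pD by (intro inverse_sqrt_diff_le) auto
  also have "\<dots> = 1 / (2 * p\<^sup>2) * W"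
    using p \<sigma> by (simp add: D_def W_def real_sqrt_mult power2_eq_square field_simps)
  finally have second: "\<bar>P - Q\<bar> \<le> 1 / (2 * p\<^sup>2) * W" .
  have "\<bar>exp (- x) * P - exp (- y) * Q\<bar> \<le> \<bar>x - y\<bar> * P + \<bar>P - Q\<bar>"
    using p \<sigma> D0 by (intro abs_exp_neg_mult_diff_le) (auto simp: x_def y_def P_def)
  also have "\<dots> \<le> (r\<^sup>2 / p ^ 3 + 1 / (2 * p\<^sup>2)) * W"
    unfolding distrib_right using first second by (rule add_mono)
  moreover have "- \<sigma> * r\<^sup>2 / D = - x" and "- r\<^sup>2 / p = - y"
    unfolding x_def y_def by (simp_all only: mult_minus_left minus_divide_left)
  ultimately show ?thesis
    by (simp add: P_def Q W_def)
qed

lemma envelope_leading_term_diagonal_approx: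
  fixes p vA vB r :: real
  assumes p: "p > 0" and A: "vA > 0" and B: "vB > 0" and r: "r \<ge> 0"
  shows "\<bar>envelope_leading_term p vA vB r r - 2 * r * exp (- r\<^sup>2 / p) / p / sqrt (pi * (vA + vB))\<bar>
         \<le> 2 * r / sqrt pi * ((r\<^sup>2 / p ^ 3 + 1 / (2 * p\<^sup>2)) * (vA * vB / ((vA + vB) * sqrt (vA + vB))))"
proof -
  define \<sigma> where "\<sigma> = vA + vB"
  define D where "D = p * \<sigma> + vA * vB"
  have \<sigma>: "\<sigma> > 0"
    using A B by (simp add: \<sigma>_def)
  have exponent: "p * (r - r)\<^sup>2 + vB * r\<^sup>2 + vA * r\<^sup>2 = \<sigma> * r\<^sup>2" and D: "vA * vB + p * (vA + vB) = D"
    by (simp_all add: \<sigma>_def D_def algebra_simps)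
  have main: "envelope_leading_term p vA vB r r = 2 * r / sqrt pi * (exp (- \<sigma> * r\<^sup>2 / D) / sqrt (p * D))"
    unfolding envelope_leading_term_def exponent D using r by (simp add: real_sqrt_mult)
  have target: "2 * r * exp (- r\<^sup>2 / p) / p / sqrt (pi * (vA + vB))
      = 2 * r / sqrt pi * (exp (- r\<^sup>2 / p) / (p * sqrt \<sigma>))"
    by (simp add: \<sigma>_def real_sqrt_mult)
  have bound: "\<bar>exp (- \<sigma> * r\<^sup>2 / D) / sqrt (p * D) - exp (- r\<^sup>2 / p) / (p * sqrt \<sigma>)\<bar>
      \<le> (r\<^sup>2 / p ^ 3 + 1 / (2 * p\<^sup>2)) * (vA * vB / (\<sigma> * sqrt \<sigma>))"
    unfolding D_def using exp_div_sqrt_perturbation_le[OF p \<sigma>, of "vA * vB" r] A B by simp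
  have factor: "\<bar>2 * r / sqrt pi\<bar> = 2 * r / sqrt pi"
    using r by simp
  show ?thesis
    unfolding main target right_diff_distrib[symmetric] abs_mult
    unfolding \<sigma>_def[symmetric] factor
    using bound r by (intro mult_left_mono) auto
qed

lemma bigo_of_eventually_abs_le:
  fixes f g h :: "'a \<Rightarrow> real"
  assumes "\<forall>\<^sub>F x in F. \<bar>f x\<bar> \<le> g x" and "g \<in> O[F](h)"
  shows "f \<in> O[F](h)"
proof -
  have "f \<in> O[F](g)"
    using assms(1) by (intro landau_o.big_mono) (auto elim: eventually_mono)
  then show ?thesis
    using assms(2) by (rule landau_o.big_trans)
qed

lemma envelope_joint_pdf_minus_leading_term_bigo:
  fixes p a rA rB :: real
  assumes "p > 0" and "a > 0" and "rA > 0" and "rB > 0"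
  shows "(\<lambda>s. envelope_joint_pdf p (s\<^sup>2) (a * s\<^sup>2) rA rB - envelope_leading_term p (s\<^sup>2) (a * s\<^sup>2) rA rB)
           \<in> O[at_right 0](\<lambda>s. s)"
proof (rule bigo_of_eventually_abs_le)
  show "\<forall>\<^sub>F s in at_right 0.
      \<bar>envelope_joint_pdf p (s\<^sup>2) (a * s\<^sup>2) rA rB - envelope_leading_term p (s\<^sup>2) (a * s\<^sup>2) rA rB\<bar>
      \<le> 1296 * sqrt (s\<^sup>2 * (a * s\<^sup>2) + p * (s\<^sup>2 + a * s\<^sup>2)) / (p * sqrt (2 * pi * p * rA * rB))"
    using eventually_at_right_less[of "0::real"]
    by eventually_elim (use assms in \<open>simp add: envelope_joint_pdf_approx\<close>)
  show "(\<lambda>s. 1296 * sqrt (s\<^sup>2 * (a * s\<^sup>2) + p * (s\<^sup>2 + a * s\<^sup>2)) / (p * sqrt (2 * pi * p * rA * rB)))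
      \<in> O[at_right 0](\<lambda>s. s)"
    using assms by real_asymp
qed

lemma envelope_leading_term_minus_target_bigo:
  fixes p a rA rB :: real
  assumes "p > 0" and "a > 0" and "rA > 0" and "rB > 0"
  shows "(\<lambda>s. envelope_leading_term p (s\<^sup>2) (a * s\<^sup>2) rA rB
             - (2 * rA * exp (- rA\<^sup>2 / p) / p)
               * (exp (- (rB - rA)\<^sup>2 / (s\<^sup>2 + a * s\<^sup>2)) / sqrt (pi * (s\<^sup>2 + a * s\<^sup>2))))
           \<in> O[at_right 0](\<lambda>s. s)"
proof (cases "rA = rB")
  case True
  show ?thesis
  proof (rule bigo_of_eventually_abs_le)
    show "\<forall>\<^sub>F s in at_right 0.
        \<bar>envelope_leading_term p (s\<^sup>2) (a * s\<^sup>2) rA rB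
          - (2 * rA * exp (- rA\<^sup>2 / p) / p)
            * (exp (- (rB - rA)\<^sup>2 / (s\<^sup>2 + a * s\<^sup>2)) / sqrt (pi * (s\<^sup>2 + a * s\<^sup>2)))\<bar>
        \<le> 2 * rA / sqrt pi * ((rA\<^sup>2 / p ^ 3 + 1 / (2 * p\<^sup>2))
            * (s\<^sup>2 * (a * s\<^sup>2) / ((s\<^sup>2 + a * s\<^sup>2) * sqrt (s\<^sup>2 + a * s\<^sup>2))))"
      using eventually_at_right_less[of "0::real"]
    proof eventually_elim
      case (elim s)
      then show ?case
        using envelope_leading_term_diagonal_approx[of p "s\<^sup>2" "a * s\<^sup>2" rA] assms by (simp add: True)
    qed
    show "(\<lambda>s. 2 * rA / sqrt pi * ((rA\<^sup>2 / p ^ 3 + 1 / (2 * p\<^sup>2))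
            * (s\<^sup>2 * (a * s\<^sup>2) / ((s\<^sup>2 + a * s\<^sup>2) * sqrt (s\<^sup>2 + a * s\<^sup>2)))))
        \<in> O[at_right 0](\<lambda>s. s)"
      using assms by real_asymp
  qed
next
  case False
  then have "(rB - rA)\<^sup>2 > 0"
    by simp
  (* both terms are then of order exp (- c / s^2) *)
  then show ?thesis
    using assms unfolding envelope_leading_term_def by (intro sum_in_bigo) real_asymp+
qed

theorem lemma2:
  fixes p a rA rB :: real
  assumes "p > 0" and "a > 0" and "rA > 0" and "rB > 0"
  shows "\<exists>C::real. \<forall>\<^sub>F sA in at_right 0.
           \<bar>envelope_joint_pdf p (sA\<^sup>2) (a * sA\<^sup>2) rA rB
             - (2 * rA * exp (- rA\<^sup>2 / p) / p)
               * (exp (- (rB - rA)\<^sup>2 / (sA\<^sup>2 + a * sA\<^sup>2))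
                  / sqrt (pi * (sA\<^sup>2 + a * sA\<^sup>2)))\<bar> \<le> C * sA"
proof -
  define f where "f sA = envelope_joint_pdf p (sA\<^sup>2) (a * sA\<^sup>2) rA rB
             - (2 * rA * exp (- rA\<^sup>2 / p) / p)
               * (exp (- (rB - rA)\<^sup>2 / (sA\<^sup>2 + a * sA\<^sup>2)) / sqrt (pi * (sA\<^sup>2 + a * sA\<^sup>2)))" for sA
  have "f \<in> O[at_right 0](\<lambda>s. s)"
    unfolding f_def[abs_def]
    using sum_in_bigo(1)[OF envelope_joint_pdf_minus_leading_term_bigo[OF assms]
        envelope_leading_term_minus_target_bigo[OF assms]]
    by simp
  then obtain C where "\<forall>\<^sub>F sA in at_right 0. \<bar>f sA\<bar> \<le> C * \<bar>sA\<bar>"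
    by (elim landau_o.bigE) auto
  then have "\<forall>\<^sub>F sA in at_right 0. \<bar>f sA\<bar> \<le> C * sA"
    using eventually_at_right_less[of "0::real"] by eventually_elim simp
  then show ?thesis
    unfolding f_def by blast
qed

end
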